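(* Let $k\ge 2$, $l,m\ge 1$, and let $\Gamma=K_{1,k-1}[K_l,K_m,\dots,K_m]$ (with $K_l$ replacing the center of the star and $K_m$ replacing each of the $k-1$ leaves), so $\Gamma$ has $n=l+(k-1)m$ vertices. Let $d_1=n-1$, $d_2=l+m-1$, and \[y_{1,2}=\tfrac12\Big[(l-1)d_1\sqrt2+(m-1)d_2\sqrt2\pm\sqrt{\big[(l-1)d_1\sqrt2-(m-1)d_2\sqrt2\big]^2+4lm(k-1)(d_1^2+d_2^2)}\Big].\] Then the Sombor spectrum of $\Gamma$ (eigenvalues of its Sombor matrix with multiplicities) consists of $-(n-1)\sqrt2$ with multiplicity $l-1$, $-(l+m-1)\sqrt2$ with multiplicity $mk-k-m+1$, $(m-1)(l+m-1)\sqrt2$ with multiplicity $k-2$, and $y_1$, $y_2$ each with multiplicity $1$ (multiplicities adding up when values coincide).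
   Context: All graphs are finite, simple and undirected. For a graph $\Gamma$ with vertices $u_1,\dots,u_N$, the Sombor matrix $S(\Gamma)$ is the $N\times N$ matrix whose $(i,j)$ entry is $\sqrt{\deg(u_i)^2+\deg(u_j)^2}$ if $u_i$ and $u_j$ are adjacent and $0$ otherwise; its eigenvalues with multiplicities form the Sombor spectrum. $K_r$ is the complete graph on $r$ vertices and $K_{1,k-1}$ is the star with center $u_1$ and leaves $u_2,\dots,u_k$. For a graph $H$ with vertices $u_1,\dots,u_k$ and pairwise disjoint graphs $\Gamma_1,\dots,\Gamma_k$, the generalized join $H[\Gamma_1,\dots,\Gamma_k]$ is obtained by replacing each $u_i$ by $\Gamma_i$ and joining every vertex of $\Gamma_i$ to every vertex of $\Gamma_j$ whenever $u_i$ is adjacent to $u_j$ in $H$. *)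

theory Defs
  imports "Jordan_Normal_Form.Char_Poly" "HOL-Library.Multiset"
begin

text \<open>A finite simple graph is represented by a pair (N, E): vertices 0..<N and an
adjacency relation E (only used on vertices < N; symmetric and irreflexive).\<close>
type_synonym graph = "nat \<times> (nat \<Rightarrow> nat \<Rightarrow> bool)"

definition gsize :: "graph \<Rightarrow> nat" where "gsize G = fst G"

definition adj :: "graph \<Rightarrow> nat \<Rightarrow> nat \<Rightarrow> bool" where
  "adj G i j \<longleftrightarrow> i < gsize G \<and> j < gsize G \<and> snd G i j"

definition simple_graph :: "graph \<Rightarrow> bool" where
  "simple_graph G \<longleftrightarrow> (\<forall>i j. adj G i j \<longrightarrow> adj G j i) \<and> (\<forall>i. \<not> adj G i i)"

definition gdeg :: "graph \<Rightarrow> nat \<Rightarrow> nat" where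
  "gdeg G i = card {j. j < gsize G \<and> adj G i j}"

definition sombor_matrix :: "graph \<Rightarrow> real mat" where
  "sombor_matrix G = mat (gsize G) (gsize G)
     (\<lambda>(i,j). if adj G i j then sqrt (real (gdeg G i)^2 + real (gdeg G j)^2) else 0)"

text \<open>The Sombor spectrum (eigenvalues with multiplicities) is the multiset M of roots of
the characteristic polynomial, i.e. char_poly S = prod over M of (x - lambda).\<close>
definition sombor_spectrum_is :: "graph \<Rightarrow> real multiset \<Rightarrow> bool" where
  "sombor_spectrum_is G M \<longleftrightarrow>
     char_poly (sombor_matrix G) = (\<Prod>x\<in>#M. [:- x, 1:])"

definition complete_graph :: "nat \<Rightarrow> graph" where
  "complete_graph r = (r, \<lambda>i j. i \<noteq> j)"

definition star_graph :: "nat \<Rightarrow> graph" where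
  "star_graph k = (k, \<lambda>i j. (i = 0 \<and> j \<noteq> 0) \<or> (j = 0 \<and> i \<noteq> 0))"

text \<open>Generalized join H[G_0,...,G_{k-1}]: the vertices of G_i form the block
[off i, off (i+1)) of the new vertex set.\<close>
definition join_off :: "graph list \<Rightarrow> nat \<Rightarrow> nat" where
  "join_off Gs i = (\<Sum>t<i. gsize (Gs ! t))"

definition gen_join :: "graph \<Rightarrow> graph list \<Rightarrow> graph" where
  "gen_join H Gs = (join_off Gs (length Gs),
     \<lambda>v w. \<exists>i<length Gs. \<exists>j<length Gs.
        join_off Gs i \<le> v \<and> v < join_off Gs (Suc i) \<and>
        join_off Gs j \<le> w \<and> w < join_off Gs (Suc j) \<and>
        ((i = j \<and> adj (Gs ! i) (v - join_off Gs i) (w - join_off Gs i)) \<or>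
         (i \<noteq> j \<and> adj H i j)))"

end

theory Submission
  imports Defs
begin

text \<open>
  In a join of complete graphs \<open>K\<^sub>r\<^sub>c\<close> over a loopless graph \<open>H\<close>, all vertices of block \<open>c\<close>
  have the same degree \<open>\<delta>\<^sub>c\<close>, so the Sombor matrix is constant on pairs of blocks up to
  the diagonal shift \<open>-\<surd>2 \<delta>\<^sub>c\<close>. In the basis made of the unit vectors at all but one
  vertex of each block, followed by the block indicator vectors, such a matrix becomes block
  lower triangular, with the diagonal \<open>-\<surd>2 \<delta>\<^sub>c\<close> (once for each non-chosen vertex of
  block \<open>c\<close>) and the quotient matrix on the blocks. Over a star the quotient matrix has the
  same shape with respect to the partition into centre and leaves, so a second reduction
  leaves a \<open>2 \<times> 2\<close> matrix, whose eigenvalues are \<open>y\<^sub>1\<close> and \<open>y\<^sub>2\<close>.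
\<close>

section \<open>Characteristic polynomials\<close>

lemma index_mult_mat_sum:
  assumes "A \<in> carrier_mat m n" "B \<in> carrier_mat n r" "i < m" "j < r"
  shows "(A * B) $$ (i,j) = (\<Sum>k<n. A $$ (i,k) * B $$ (k,j))"
  using assms by (simp add: scalar_prod_def atLeast0LessThan)

lemma char_poly_four_block_mat_upper_right_zero:
  fixes A :: "'a :: idom mat"
  assumes "A \<in> carrier_mat n n" "C \<in> carrier_mat m n" "B \<in> carrier_mat m m"
  shows "char_poly (four_block_mat A (0\<^sub>m n m) C B) = char_poly A * char_poly B"
proof -
  have "char_poly_matrix (four_block_mat A (0\<^sub>m n m) C B) =
      four_block_mat (char_poly_matrix A) (0\<^sub>m n m) (map_mat (\<lambda>a. [:-a:]) C) (char_poly_matrix B)"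
    using assms by (intro eq_matI) (auto simp: char_poly_matrix_def)
  then show ?thesis
    unfolding char_poly_def using assms
    by (simp add: det_four_block_mat_upper_right_zero[where m = m and n = n])
qed

lemma char_poly_mat_diag: "char_poly (mat_diag n f) = (\<Prod>i<n. [:- f i, 1:])"
proof -
  have "upper_triangular (mat_diag n f)" by (simp add: upper_triangular_def mat_diag_def)
  then have "char_poly (mat_diag n f) = (\<Prod>a \<leftarrow> diag_mat (mat_diag n f). [:- a, 1:])"
    by (intro char_poly_upper_triangular[of _ n]) auto
  also have "diag_mat (mat_diag n f) = map f [0..<n]"
    by (simp add: diag_mat_def mat_diag_def map_eq_conv)
  finally show ?thesis
    by (simp add: prod.distinct_set_conv_list[symmetric] atLeast0LessThan comp_def)
qed

lemma char_poly_conjugate: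
  fixes A P Q :: "'a :: field mat"
  assumes "A \<in> carrier_mat n n" "P \<in> carrier_mat n n" "Q \<in> carrier_mat n n" "Q * P = 1\<^sub>m n"
  shows "char_poly (Q * (A * P)) = char_poly A"
proof -
  have PQ: "P * Q = 1\<^sub>m n" by (rule mat_mult_left_right_inverse[OF assms(3,2,4)])
  have "P * (Q * (A * P)) * Q = P * Q * A * (P * Q)"
    using assms by (simp add: assoc_mult_mat[of _ n n _ n _ n])
  also have "\<dots> = A" using assms(1) PQ by simp
  finally have "similar_mat_wit A (Q * (A * P)) P Q"
    using assms PQ by (intro similar_mat_witI) auto
  then have "similar_mat A (Q * (A * P))"
    unfolding similar_mat_def by blast
  then show ?thesis by (rule char_poly_similar[symmetric])
qed

lemma det_carrier_mat_2:
  assumes "A \<in> carrier_mat 2 2"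
  shows "det A = A $$ (0,0) * A $$ (1,1) - A $$ (0,1) * A $$ (1,0)"
proof -
  have "det A = (\<Sum>j<2. A $$ (0,j) * cofactor A 0 j)"
    by (rule laplace_expansion_row[OF assms]) simp
  moreover have "cofactor A 0 0 = A $$ (1,1)" "cofactor A 0 1 = - A $$ (1,0)"
    using assms by (auto simp: cofactor_def det_single mat_delete_def)
  ultimately show ?thesis by (simp add: numeral_2_eq_2)
qed

lemma char_poly_carrier_mat_2:
  assumes "A \<in> carrier_mat 2 2"
  shows "char_poly A = [:- A $$ (0,0), 1:] * [:- A $$ (1,1), 1:] - [:A $$ (0,1) * A $$ (1,0):]"
proof -
  have "char_poly_matrix A \<in> carrier_mat 2 2" using assms by simp
  then have "char_poly A = char_poly_matrix A $$ (0,0) * char_poly_matrix A $$ (1,1)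
      - char_poly_matrix A $$ (0,1) * char_poly_matrix A $$ (1,0)"
    unfolding char_poly_def by (rule det_carrier_mat_2)
  then show ?thesis using assms by (simp add: char_poly_matrix_def)
qed

lemma monic_quadratic_factor:
  fixes a b u y1 y2 :: "'a :: comm_ring_1"
  assumes "y1 + y2 = a + b" "y1 * y2 = a * b - u"
  shows "[:- a, 1:] * [:- b, 1:] - [:u:] = [:- y1, 1:] * [:- y2, 1:]"
  using assms by (simp add: algebra_simps)

lemma monic_quadratic_roots:
  fixes a b u :: real
  assumes "0 \<le> (a - b)\<^sup>2 + 4 * u"
  defines "D \<equiv> sqrt ((a - b)\<^sup>2 + 4 * u)"
  shows "[:- a, 1:] * [:- b, 1:] - [:u:] = [:- ((a + b + D) / 2), 1:] * [:- ((a + b - D) / 2), 1:]"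
proof (rule monic_quadratic_factor)
  have "D\<^sup>2 = (a - b)\<^sup>2 + 4 * u" using assms by simp
  then show "(a + b + D) / 2 * ((a + b - D) / 2) = a * b - u"
    by (simp add: field_simps power2_eq_square)
qed (simp add: field_simps)

section \<open>Matrices that are constant on classes up to the diagonal\<close>

definition class_card :: "nat \<Rightarrow> (nat \<Rightarrow> nat) \<Rightarrow> nat \<Rightarrow> nat" where
  "class_card n cl c = card {i. i < n \<and> cl i = c}"

definition class_structured_mat ::
    "nat \<Rightarrow> (nat \<Rightarrow> nat) \<Rightarrow> (nat \<Rightarrow> nat \<Rightarrow> 'a :: comm_ring_1) \<Rightarrow> (nat \<Rightarrow> 'a) \<Rightarrow> 'a mat" where
  "class_structured_mat n cl K \<gamma> =
     mat n n (\<lambda>(i,j). K (cl i) (cl j) + (if i = j then \<gamma> (cl i) else 0))"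

lemma class_structured_mat_carrier [simp]: "class_structured_mat n cl K \<gamma> \<in> carrier_mat n n"
  by (simp add: class_structured_mat_def)

definition quotient_mat ::
    "nat \<Rightarrow> (nat \<Rightarrow> nat) \<Rightarrow> nat \<Rightarrow> (nat \<Rightarrow> nat \<Rightarrow> 'a :: comm_ring_1) \<Rightarrow> (nat \<Rightarrow> 'a) \<Rightarrow> 'a mat" where
  "quotient_mat n cl p K \<gamma> =
     mat p p (\<lambda>(c,d). K c d * of_nat (class_card n cl d) + (if c = d then \<gamma> c else 0))"

lemma quotient_mat_carrier [simp]: "quotient_mat n cl p K \<gamma> \<in> carrier_mat p p"
  and quotient_mat_dim [simp]: "dim_row (quotient_mat n cl p K \<gamma>) = p" "dim_col (quotient_mat n cl p K \<gamma>) = p"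
  by (simp_all add: quotient_mat_def)

locale index_classes =
  fixes n p :: nat and cl :: "nat \<Rightarrow> nat"
  assumes class_less: "i < n \<Longrightarrow> cl i < p"
    and class_nonempty: "c < p \<Longrightarrow> \<exists>i<n. cl i = c"
begin

definition rep :: "nat \<Rightarrow> nat" where
  "rep c = (SOME i. i < n \<and> cl i = c)"

lemma rep: "c < p \<Longrightarrow> rep c < n \<and> cl (rep c) = c"
  unfolding rep_def using someI_ex[OF class_nonempty] by blast

lemma inj_on_rep: "inj_on rep {..<p}"
  by (rule inj_onI) (metis lessThan_iff rep)

lemma card_nonreps: "card ({..<n} - rep ` {..<p}) = n - p" and le_n: "p \<le> n"
proof -
  have sub: "rep ` {..<p} \<subseteq> {..<n}" using rep by auto
  have card_reps: "card (rep ` {..<p}) = p" using card_image[OF inj_on_rep] by simp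
  show "p \<le> n" using card_mono[OF finite_lessThan sub] card_reps by simp
  show "card ({..<n} - rep ` {..<p}) = n - p"
    using card_Diff_subset[OF finite_imageI[OF finite_lessThan] sub] card_reps by simp
qed

definition nonrep :: "nat \<Rightarrow> nat" where
  "nonrep = (SOME g. bij_betw g {..<n - p} ({..<n} - rep ` {..<p}))"

lemma bij_betw_nonrep: "bij_betw nonrep {..<n - p} ({..<n} - rep ` {..<p})"
proof -
  have "\<exists>g. bij_betw g {..<n - p} ({..<n} - rep ` {..<p})"
    by (rule finite_same_card_bij) (simp_all add: card_nonreps)
  then show ?thesis unfolding nonrep_def by (rule someI_ex)
qed

lemma nonrep_less: "t < n - p \<Longrightarrow> nonrep t < n"
  and rep_neq_nonrep: "t < n - p \<Longrightarrow> c < p \<Longrightarrow> rep c \<noteq> nonrep t"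
proof -
  assume "t < n - p"
  then have "nonrep t \<in> {..<n} - rep ` {..<p}" using bij_betwE[OF bij_betw_nonrep] by blast
  then show "nonrep t < n" "c < p \<Longrightarrow> rep c \<noteq> nonrep t"
    by (simp, metis DiffD2 imageI lessThan_iff)
qed

lemma nonrep_eq_iff: "t < n - p \<Longrightarrow> t' < n - p \<Longrightarrow> nonrep t = nonrep t' \<longleftrightarrow> t = t'"
  using bij_betw_imp_inj_on[OF bij_betw_nonrep] by (auto simp: inj_on_def)

lemma prod_nonrep_classes:
  "(\<Prod>t<n - p. f (cl (nonrep t))) = (\<Prod>c<p. f c ^ (class_card n cl c - 1))"
proof -
  have "(\<Prod>t<n - p. f (cl (nonrep t))) = (\<Prod>i\<in>{..<n} - rep ` {..<p}. f (cl i))"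
    using prod.reindex_bij_betw[OF bij_betw_nonrep] by simp
  also have "\<dots> = (\<Prod>c<p. \<Prod>i\<in>{i \<in> {..<n} - rep ` {..<p}. cl i = c}. f (cl i))"
    by (rule prod.group[symmetric]) (use class_less in auto)
  also have "\<dots> = (\<Prod>c<p. f c ^ (class_card n cl c - 1))"
  proof (rule prod.cong[OF refl])
    fix c assume c: "c \<in> {..<p}"
    then have "{i \<in> {..<n} - rep ` {..<p}. cl i = c} = {i. i < n \<and> cl i = c} - {rep c}"
      using rep by auto
    with c rep show "(\<Prod>i\<in>{i \<in> {..<n} - rep ` {..<p}. cl i = c}. f (cl i)) = f c ^ (class_card n cl c - 1)"
      by (simp add: class_card_def card_Diff_singleton)
  qed
  finally show ?thesis .
qed

definition class_basis :: "'a :: field mat" where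
  "class_basis = mat n n (\<lambda>(i,t).
     if t < n - p then of_bool (i = nonrep t) else of_bool (cl i = t - (n - p)))"

definition class_basis_inv :: "'a :: field mat" where
  "class_basis_inv = mat n n (\<lambda>(t,i).
     if t < n - p then of_bool (i = nonrep t) - of_bool (i = rep (cl (nonrep t)))
     else of_bool (i = rep (t - (n - p))))"

lemma class_basis_carrier [simp]: "class_basis \<in> carrier_mat n n"
  and class_basis_inv_carrier [simp]: "class_basis_inv \<in> carrier_mat n n"
  and class_basis_dim [simp]: "dim_row class_basis = n" "dim_col class_basis = n"
  and class_basis_inv_dim [simp]: "dim_row class_basis_inv = n" "dim_col class_basis_inv = n"
  by (simp_all add: class_basis_def class_basis_inv_def)

lemma class_basis_inv_mult_index:
  assumes "M \<in> carrier_mat n n" "t < n" "j < n"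
  shows "(class_basis_inv * M) $$ (t,j) = (if t < n - p
    then M $$ (nonrep t, j) - M $$ (rep (cl (nonrep t)), j) else M $$ (rep (t - (n - p)), j))"
proof -
  have "(class_basis_inv * M) $$ (t,j) = (\<Sum>i<n. class_basis_inv $$ (t,i) * M $$ (i,j))"
    using assms by (intro index_mult_mat_sum) auto
  also have "\<dots> = (if t < n - p
      then M $$ (nonrep t, j) - M $$ (rep (cl (nonrep t)), j) else M $$ (rep (t - (n - p)), j))"
  proof (cases "t < n - p")
    case True
    then have "rep (cl (nonrep t)) < n" using nonrep_less rep class_less by blast
    with True assms nonrep_less[OF True] show ?thesis
      by (simp add: class_basis_inv_def of_bool_def if_distrib[of "\<lambda>x. x * _"] sum.If_cases
          left_diff_distrib sum_subtractf Int_absorb1)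
  next
    case False
    then have "rep (t - (n - p)) < n" using assms le_n rep by simp
    with False assms show ?thesis
      by (simp add: class_basis_inv_def of_bool_def if_distrib[of "\<lambda>x. x * _"] sum.If_cases
          Int_absorb1)
  qed
  finally show ?thesis .
qed

lemma mult_class_basis_index:
  assumes "M \<in> carrier_mat n n" "i < n" "t < n"
  shows "(M * class_basis) $$ (i,t) = (if t < n - p then M $$ (i, nonrep t)
    else (\<Sum>j | j < n \<and> cl j = t - (n - p). M $$ (i,j)))"
proof -
  have "(M * class_basis) $$ (i,t) = (\<Sum>j<n. M $$ (i,j) * class_basis $$ (j,t))"
    using assms by (intro index_mult_mat_sum) auto
  also have "\<dots> = (\<Sum>j<n. M $$ (i,j) *
      (if t < n - p then of_bool (j = nonrep t) else of_bool (cl j = t - (n - p))))"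
    using assms by (intro sum.cong) (auto simp: class_basis_def)
  also have "\<dots> = (if t < n - p then M $$ (i, nonrep t)
      else (\<Sum>j | j < n \<and> cl j = t - (n - p). M $$ (i,j)))"
  proof (cases "t < n - p")
    case True
    then have "{..<n} \<inter> {j. j = nonrep t} = {nonrep t}" using nonrep_less by auto
    with True show ?thesis by simp
  next
    case False
    have "{..<n} \<inter> {j. cl j = t - (n - p)} = {j. j < n \<and> cl j = t - (n - p)}" by auto
    with False show ?thesis by simp
  qed
  finally show ?thesis .
qed

lemma class_structured_mult_class_basis_index:
  assumes "i < n" "t < n"
  shows "(class_structured_mat n cl K \<gamma> * class_basis) $$ (i,t) =
    (if t < n - p then K (cl i) (cl (nonrep t)) + of_bool (i = nonrep t) * \<gamma> (cl i)
     else quotient_mat n cl p K \<gamma> $$ (cl i, t - (n - p)))"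
proof -
  have col: "(class_structured_mat n cl K \<gamma> * class_basis) $$ (i,t) =
    (if t < n - p then class_structured_mat n cl K \<gamma> $$ (i, nonrep t)
     else (\<Sum>j | j < n \<and> cl j = t - (n - p). class_structured_mat n cl K \<gamma> $$ (i,j)))"
    using assms by (intro mult_class_basis_index) auto
  show ?thesis
  proof (cases "t < n - p")
    case True
    with assms nonrep_less show ?thesis
      unfolding col by (auto simp: class_structured_mat_def)
  next
    case False
    define c where "c = t - (n - p)"
    have c: "c < p" using assms False le_n by (simp add: c_def)
    have "(\<Sum>j | j < n \<and> cl j = c. class_structured_mat n cl K \<gamma> $$ (i,j))
        = (\<Sum>j | j < n \<and> cl j = c. K (cl i) c + (if j = i then \<gamma> (cl i) else 0))"
      using assms by (intro sum.cong) (auto simp: class_structured_mat_def)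
    also have "\<dots> = K (cl i) c * of_nat (class_card n cl c) + (if cl i = c then \<gamma> (cl i) else 0)"
      using assms by (simp add: sum.distrib class_card_def)
    also have "\<dots> = quotient_mat n cl p K \<gamma> $$ (cl i, c)"
      using assms c class_less by (simp add: quotient_mat_def)
    finally show ?thesis
      using False unfolding col c_def by simp
  qed
qed

lemma class_basis_conjugate_class_structured_mat:
  "class_basis_inv * (class_structured_mat n cl K \<gamma> * class_basis) =
     four_block_mat (mat_diag (n - p) (\<lambda>t. \<gamma> (cl (nonrep t)))) (0\<^sub>m (n - p) p)
       (mat p (n - p) (\<lambda>(c,t). K c (cl (nonrep t)))) (quotient_mat n cl p K \<gamma>)"
    (is "?L = ?T")
proof (rule eq_matI)
  fix t j assume "t < dim_row ?T" "j < dim_col ?T"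
  then have tj: "t < n" "j < n" using le_n by (auto simp: mat_diag_def)
  have AP: "class_structured_mat n cl K \<gamma> * class_basis \<in> carrier_mat n n"
    by (rule mult_carrier_mat) auto
  show "?L $$ (t,j) = ?T $$ (t,j)"
  proof (cases "t < n - p")
    case True
    then show ?thesis
      using AP tj le_n nonrep_less[OF True] class_less[OF nonrep_less[OF True]] rep nonrep_less
      by (auto simp: class_basis_inv_mult_index class_structured_mult_class_basis_index mat_diag_def
          rep_neq_nonrep nonrep_eq_iff simp del: index_mult_mat)
  next
    case False
    define c where "c = t - (n - p)"
    have c: "c < p" using False tj le_n by (simp add: c_def)
    with AP False tj le_n rep[OF c] show ?thesis
      by (auto simp: class_basis_inv_mult_index class_structured_mult_class_basis_index mat_diag_def
          quotient_mat_def rep_neq_nonrep simp del: index_mult_mat simp flip: c_def)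
  qed
qed (use le_n in \<open>auto simp: mat_diag_def\<close>)

text \<open>The identity matrix is class-structured (\<open>K = 0\<close>, \<open>\<gamma> = 1\<close>), so the conjugation formula
  above also shows that \<open>class_basis_inv\<close> inverts \<open>class_basis\<close>.\<close>

lemma class_basis_inv_mult_class_basis: "(class_basis_inv :: 'a :: field mat) * class_basis = 1\<^sub>m n"
proof -
  have "class_structured_mat n cl (\<lambda>_ _. 0) (\<lambda>_. 1) = (1\<^sub>m n :: 'a mat)"
    by (auto simp: class_structured_mat_def)
  then have "(class_basis_inv :: 'a mat) * class_basis =
      class_basis_inv * (class_structured_mat n cl (\<lambda>_ _. 0) (\<lambda>_. 1) * class_basis)"
    by (simp add: left_mult_one_mat)
  also have "\<dots> = four_block_mat (1\<^sub>m (n - p)) (0\<^sub>m (n - p) p)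
      (mat p (n - p) (\<lambda>(c,t). 0)) (quotient_mat n cl p (\<lambda>_ _. 0) (\<lambda>_. 1))"
    by (simp add: class_basis_conjugate_class_structured_mat)
  also have "mat p (n - p) (\<lambda>(c,t). 0) = 0\<^sub>m p (n - p)"
    by (intro eq_matI) auto
  also have "quotient_mat n cl p (\<lambda>_ _. 0) (\<lambda>_. 1) = 1\<^sub>m p"
    by (simp add: quotient_mat_def one_mat_def)
  also have "four_block_mat (1\<^sub>m (n - p)) (0\<^sub>m (n - p) p) (0\<^sub>m p (n - p)) (1\<^sub>m p) =
      (1\<^sub>m n :: 'a mat)"
    using le_n by simp
  finally show ?thesis .
qed

theorem char_poly_class_structured_mat:
  fixes K :: "nat \<Rightarrow> nat \<Rightarrow> 'a :: field"
  shows "char_poly (class_structured_mat n cl K \<gamma>) =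
    char_poly (quotient_mat n cl p K \<gamma>) * (\<Prod>c<p. [:- \<gamma> c, 1:] ^ (class_card n cl c - 1))"
proof -
  have "char_poly (class_structured_mat n cl K \<gamma>) =
      char_poly (class_basis_inv * (class_structured_mat n cl K \<gamma> * class_basis))"
    by (rule char_poly_conjugate[symmetric]) (simp_all add: class_basis_inv_mult_class_basis)
  also have "\<dots> = char_poly (mat_diag (n - p) (\<lambda>t. \<gamma> (cl (nonrep t)))) *
      char_poly (quotient_mat n cl p K \<gamma>)"
    unfolding class_basis_conjugate_class_structured_mat
    by (rule char_poly_four_block_mat_upper_right_zero) auto
  also have "\<dots> = (\<Prod>c<p. [:- \<gamma> c, 1:] ^ (class_card n cl c - 1)) *
      char_poly (quotient_mat n cl p K \<gamma>)"
    by (simp only: char_poly_mat_diag prod_nonrep_classes[of "\<lambda>c. [:- \<gamma> c, 1:]"])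
  finally show ?thesis by (simp only: mult.commute)
qed

end

section \<open>Sombor matrices of joins of complete graphs\<close>

lemma join_off_Suc: "join_off Gs (Suc i) = join_off Gs i + gsize (Gs ! i)"
  by (simp add: join_off_def)

lemma join_off_mono: "i \<le> j \<Longrightarrow> join_off Gs i \<le> join_off Gs j"
  unfolding join_off_def by (rule sum_mono2) auto

lemma gsize_gen_join: "gsize (gen_join H Gs) = join_off Gs (length Gs)"
  by (simp add: gsize_def gen_join_def)

definition join_block :: "graph list \<Rightarrow> nat \<Rightarrow> nat" where
  "join_block Gs v = (LEAST i. v < join_off Gs (Suc i))"

lemma join_block_eqI:
  assumes "join_off Gs i \<le> v" "v < join_off Gs (Suc i)"
  shows "join_block Gs v = i"
  unfolding join_block_def
proof (rule Least_equality)
  show "i \<le> j" if "v < join_off Gs (Suc j)" for j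
    using that assms(1) join_off_mono[of "Suc j" i Gs] by (metis not_less_eq_eq order.trans not_le)
qed (fact assms(2))

lemma join_block:
  assumes "v < join_off Gs (length Gs)"
  shows "join_block Gs v < length Gs"
    and "join_off Gs (join_block Gs v) \<le> v" "v < join_off Gs (Suc (join_block Gs v))"
proof -
  have "length Gs \<noteq> 0" using assms by (auto simp: join_off_def)
  then have ex: "v < join_off Gs (Suc (length Gs - 1))" using assms by simp
  show "v < join_off Gs (Suc (join_block Gs v))"
    unfolding join_block_def by (rule LeastI[of "\<lambda>i. v < join_off Gs (Suc i)", OF ex])
  show "join_block Gs v < length Gs"
    using Least_le[of "\<lambda>i. v < join_off Gs (Suc i)", OF ex] \<open>length Gs \<noteq> 0\<close>
    unfolding join_block_def by linarith
  show "join_off Gs (join_block Gs v) \<le> v"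
  proof (cases "join_block Gs v")
    case (Suc b)
    then have "\<not> v < join_off Gs (Suc b)"
      unfolding join_block_def by (metis lessI not_less_Least)
    then show ?thesis using Suc by simp
  qed (simp add: join_off_def)
qed

lemma join_block_eq_iff:
  assumes "v < join_off Gs (length Gs)"
  shows "join_block Gs v = i \<longleftrightarrow> join_off Gs i \<le> v \<and> v < join_off Gs (Suc i)"
  using join_block[OF assms] join_block_eqI by metis

lemma adj_gen_join:
  "adj (gen_join H Gs) v w \<longleftrightarrow>
     v < join_off Gs (length Gs) \<and> w < join_off Gs (length Gs) \<and>
     (if join_block Gs v = join_block Gs w
      then adj (Gs ! join_block Gs v) (v - join_off Gs (join_block Gs v)) (w - join_off Gs (join_block Gs v))
      else adj H (join_block Gs v) (join_block Gs w))"
proof (cases "v < join_off Gs (length Gs) \<and> w < join_off Gs (length Gs)")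
  case True
  then have "snd (gen_join H Gs) v w \<longleftrightarrow>
      (\<exists>i<length Gs. \<exists>j<length Gs. join_block Gs v = i \<and> join_block Gs w = j \<and>
        ((i = j \<and> adj (Gs ! i) (v - join_off Gs i) (w - join_off Gs i)) \<or> (i \<noteq> j \<and> adj H i j)))"
    by (simp add: gen_join_def join_block_eq_iff)
  with True join_block(1) show ?thesis
    by (auto simp: adj_def gsize_gen_join)
qed (auto simp: adj_def gsize_gen_join)

lemma gsize_complete_graph [simp]: "gsize (complete_graph r) = r"
  by (simp add: gsize_def complete_graph_def)

lemma adj_complete_graph: "adj (complete_graph r) i j \<longleftrightarrow> i < r \<and> j < r \<and> i \<noteq> j"
  by (simp add: adj_def gsize_def complete_graph_def)

lemma sqrt_2_mult_power2: "0 \<le> x \<Longrightarrow> sqrt (2 * x\<^sup>2) = sqrt 2 * (x :: real)"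
  by (simp add: real_sqrt_mult)

locale complete_join =
  fixes H :: graph and rs :: "nat list"
  assumes loopless: "\<And>c. \<not> adj H c c"
    and block_size_pos: "\<And>c. c < length rs \<Longrightarrow> 0 < rs ! c"
begin

abbreviation blocks :: "graph list" where
  "blocks \<equiv> map complete_graph rs"

abbreviation join_size :: nat where
  "join_size \<equiv> join_off blocks (length rs)"

abbreviation blk :: "nat \<Rightarrow> nat" where
  "blk \<equiv> join_block blocks"

lemma join_off_blocks_Suc: "c < length rs \<Longrightarrow> join_off blocks (Suc c) = join_off blocks c + rs ! c"
  by (simp add: join_off_Suc)

lemma blk_bounds:
  assumes "v < join_size"
  shows "blk v < length rs" "join_off blocks (blk v) \<le> v" "v < join_off blocks (blk v) + rs ! blk v"
  using join_block[of v blocks] assms by (simp_all add: join_off_blocks_Suc)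

lemma adj_complete_join:
  "adj (gen_join H blocks) v w \<longleftrightarrow>
     v < join_size \<and> w < join_size \<and> (if blk v = blk w then v \<noteq> w else adj H (blk v) (blk w))"
proof (cases "v < join_size \<and> w < join_size")
  case True
  with blk_bounds[of v] blk_bounds[of w] show ?thesis
    by (auto simp: adj_gen_join adj_complete_graph)
qed (auto simp: adj_gen_join)

lemma block_vertices:
  assumes "c < length rs"
  shows "{w. w < join_size \<and> blk w = c} = {join_off blocks c..<join_off blocks c + rs ! c}"
proof -
  have "join_off blocks (Suc c) \<le> join_size" using assms by (intro join_off_mono) simp
  then show ?thesis
    using assms blk_bounds by (auto simp: join_off_blocks_Suc intro: join_block_eqI)
qed

lemma class_card_blk: "c < length rs \<Longrightarrow> class_card join_size blk c = rs ! c"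
  by (simp add: class_card_def block_vertices)

sublocale index_classes join_size "length rs" blk
proof
  show "blk v < length rs" if "v < join_size" for v using blk_bounds(1)[OF that] .
  show "\<exists>v<join_size. blk v = c" if "c < length rs" for c
    using that block_size_pos[OF that] block_vertices[OF that] by (metis (mono_tags) atLeastLessThan_iff
        le_add1 less_add_same_cancel1 mem_Collect_eq order.refl)
qed

definition block_deg :: "nat \<Rightarrow> nat" where
  "block_deg c = rs ! c - 1 + (\<Sum>d | d < length rs \<and> adj H c d. rs ! d)"

lemma gdeg_complete_join:
  assumes "v < join_size"
  shows "gdeg (gen_join H blocks) v = block_deg (blk v)"
proof -
  define b where "b = blk v"
  have b: "b < length rs" using blk_bounds(1)[OF assms] by (simp add: b_def)
  have nbrs: "{w. w < gsize (gen_join H blocks) \<and> adj (gen_join H blocks) v w} =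
      ({w. w < join_size \<and> blk w = b} - {v}) \<union>
      (\<Union>d \<in> {d. d < length rs \<and> adj H b d}. {w. w < join_size \<and> blk w = d})"
    using assms loopless blk_bounds(1) by (auto simp: adj_complete_join gsize_gen_join b_def)
  have "card (\<Union>d \<in> {d. d < length rs \<and> adj H b d}. {w. w < join_size \<and> blk w = d}) =
      (\<Sum>d | d < length rs \<and> adj H b d. rs ! d)"
    by (subst card_UN_disjoint) (auto simp: class_card_blk[unfolded class_card_def])
  moreover have "card ({w. w < join_size \<and> blk w = b} - {v}) = rs ! b - 1"
    using assms b class_card_blk[OF b] by (simp add: class_card_def b_def)
  moreover have "({w. w < join_size \<and> blk w = b} - {v}) \<inter>
      (\<Union>d \<in> {d. d < length rs \<and> adj H b d}. {w. w < join_size \<and> blk w = d}) = {}"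
    using loopless by auto
  ultimately show ?thesis
    unfolding gdeg_def nbrs by (simp add: card_Un_disjoint block_deg_def b_def)
qed

definition block_weight :: "nat \<Rightarrow> nat \<Rightarrow> real" where
  "block_weight c d =
     (if c = d then sqrt 2 * real (block_deg c)
      else if adj H c d then sqrt ((real (block_deg c))\<^sup>2 + (real (block_deg d))\<^sup>2) else 0)"

lemma sombor_matrix_complete_join:
  "sombor_matrix (gen_join H blocks) =
     class_structured_mat join_size blk block_weight (\<lambda>c. - sqrt 2 * real (block_deg c))"
    (is "_ = ?S")
proof (rule eq_matI)
  fix v w assume "v < dim_row ?S" "w < dim_col ?S"
  then have "v < join_size" "w < join_size" by (auto simp: class_structured_mat_def)
  then show "sombor_matrix (gen_join H blocks) $$ (v,w) = ?S $$ (v,w)"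
    by (auto simp: sombor_matrix_def class_structured_mat_def block_weight_def gsize_gen_join
        adj_complete_join gdeg_complete_join sqrt_2_mult_power2)
qed (simp_all add: sombor_matrix_def class_structured_mat_def gsize_gen_join)

definition sombor_quotient :: "real mat" where
  "sombor_quotient = mat (length rs) (length rs) (\<lambda>(c,d).
     if c = d then (real (rs ! c) - 1) * real (block_deg c) * sqrt 2
     else if adj H c d then real (rs ! d) * sqrt ((real (block_deg c))\<^sup>2 + (real (block_deg d))\<^sup>2)
     else 0)"

theorem char_poly_sombor_complete_join:
  "char_poly (sombor_matrix (gen_join H blocks)) =
     char_poly sombor_quotient * (\<Prod>c<length rs. [:sqrt 2 * real (block_deg c), 1:] ^ (rs ! c - 1))"
proof -
  have "quotient_mat join_size blk (length rs) block_weight (\<lambda>c. - sqrt 2 * real (block_deg c)) =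
      sombor_quotient"
    by (rule eq_matI)
      (auto simp: quotient_mat_def sombor_quotient_def block_weight_def class_card_blk algebra_simps)
  moreover have "(\<Prod>c<length rs. [:- (- sqrt 2 * real (block_deg c)), 1:] ^ (class_card join_size blk c - 1)) =
      (\<Prod>c<length rs. [:sqrt 2 * real (block_deg c), 1:] ^ (rs ! c - 1))"
    by (rule prod.cong) (simp_all add: class_card_blk)
  ultimately show ?thesis
    unfolding sombor_matrix_complete_join char_poly_class_structured_mat by simp
qed

end

section \<open>Joins over a star\<close>

lemma adj_star_graph: "adj (star_graph k) i j \<longleftrightarrow> i < k \<and> j < k \<and> (i = 0 \<longleftrightarrow> j \<noteq> 0)"
  by (auto simp: adj_def gsize_def star_graph_def)

definition centre_or_leaf :: "nat \<Rightarrow> nat" where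
  "centre_or_leaf c = (if c = 0 then 0 else 1)"

lemma class_card_centre_or_leaf:
  assumes "1 \<le> k"
  shows "class_card k centre_or_leaf 0 = 1" "class_card k centre_or_leaf 1 = k - 1"
proof -
  have "{c. c < k \<and> centre_or_leaf c = 0} = {0}" "{c. c < k \<and> centre_or_leaf c = 1} = {1..<k}"
    using assms by (auto simp: centre_or_leaf_def)
  then show "class_card k centre_or_leaf 0 = 1" "class_card k centre_or_leaf 1 = k - 1"
    by (simp_all add: class_card_def)
qed

context
  fixes k l m :: nat
  assumes k2: "2 \<le> k" and l1: "1 \<le> l" and m1: "1 \<le> m"
begin

interpretation star: complete_join "star_graph k" "l # replicate (k - 1) m"
proof
  show "0 < (l # replicate (k - 1) m) ! c" if "c < length (l # replicate (k - 1) m)" for c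
    using that l1 m1 by (cases c) auto
qed (simp add: adj_star_graph)

lemma block_deg_star:
  assumes "c < k"
  shows "real (star.block_deg c) = (if c = 0 then real (l + (k - 1) * m) - 1 else real l + real m - 1)"
proof (cases c)
  case 0
  have "{d. d < length (l # replicate (k - 1) m) \<and> adj (star_graph k) 0 d} = {1..<k}"
    using k2 by (auto simp: adj_star_graph)
  moreover have "(\<Sum>d = 1..<k. (l # replicate (k - 1) m) ! d) = (\<Sum>d = 1..<k. m)"
    by (rule sum.cong) (auto simp: nth_Cons')
  ultimately show ?thesis using 0 l1 unfolding star.block_deg_def by (simp add: of_nat_diff)
next
  case (Suc c')
  have "{d. d < length (l # replicate (k - 1) m) \<and> adj (star_graph k) (Suc c') d} = {0}"
    using assms Suc by (auto simp: adj_star_graph)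
  then show ?thesis using Suc assms l1 m1 unfolding star.block_deg_def by (simp add: of_nat_diff)
qed

lemma char_poly_sombor_quotient_star:
  defines "\<delta>0 \<equiv> real (star.block_deg 0)" and "\<delta>1 \<equiv> real (star.block_deg 1)"
  defines "a \<equiv> (real l - 1) * \<delta>0 * sqrt 2" and "b \<equiv> (real m - 1) * \<delta>1 * sqrt 2"
  shows "char_poly star.sombor_quotient =
    ([:- a, 1:] * [:- b, 1:] - [:real l * real m * (real k - 1) * (\<delta>0\<^sup>2 + \<delta>1\<^sup>2):]) *
    [:- b, 1:] ^ (k - 2)"
proof -
  define \<beta> where "\<beta> = sqrt (\<delta>0\<^sup>2 + \<delta>1\<^sup>2)"
  define K where "K e f = (if e = 0 then (if f = 0 then a else real m * \<beta>)
    else (if f = 0 then real l * \<beta> else 0))" for e f :: nat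
  define g where "g e = (if e = 0 then 0 else b)" for e :: nat
  interpret centre_leaves: index_classes k 2 centre_or_leaf
    by unfold_locales (use k2 in \<open>auto simp: centre_or_leaf_def intro: exI[of _ 1]\<close>)
  have deg: "real (star.block_deg c) = (if c = 0 then \<delta>0 else \<delta>1)" if "c < k" for c
    using block_deg_star[OF that] block_deg_star[of 0] block_deg_star[of 1] k2
    by (simp add: \<delta>0_def \<delta>1_def)
  have "star.sombor_quotient = class_structured_mat k centre_or_leaf K g"
    (is "_ = ?S")
  proof (rule eq_matI)
    fix c d assume "c < dim_row ?S" "d < dim_col ?S"
    then have cd: "c < k" "d < k" by (auto simp: class_structured_mat_def)
    then show "star.sombor_quotient $$ (c,d) = ?S $$ (c,d)"
      using deg[OF cd(1)] deg[OF cd(2)] unfolding star.sombor_quotient_def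
      by (auto simp: class_structured_mat_def adj_star_graph nth_Cons'
          centre_or_leaf_def K_def g_def a_def b_def \<beta>_def add.commute)
  qed (unfold star.sombor_quotient_def, use k2 in \<open>auto simp: class_structured_mat_def\<close>)
  then have reduce: "char_poly star.sombor_quotient =
      char_poly (quotient_mat k centre_or_leaf 2 K g) * [:- b, 1:] ^ (k - 2)"
    using class_card_centre_or_leaf k2
    by (simp add: centre_leaves.char_poly_class_structured_mat g_def numeral_2_eq_2)
  have quotient: "char_poly (quotient_mat k centre_or_leaf 2 K g) =
      [:- a, 1:] * [:- b, 1:] - [:real m * \<beta> * real (k - 1) * (real l * \<beta>):]"
    using class_card_centre_or_leaf k2
    by (simp add: char_poly_carrier_mat_2 quotient_mat_def K_def g_def)
  have "\<beta>\<^sup>2 = \<delta>0\<^sup>2 + \<delta>1\<^sup>2" by (simp add: \<beta>_def)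
  then have "real m * \<beta> * real (k - 1) * (real l * \<beta>) =
      real l * real m * (real k - 1) * (\<delta>0\<^sup>2 + \<delta>1\<^sup>2)"
    using k2 by (simp add: of_nat_diff power2_eq_square)
  then show ?thesis by (simp only: reduce quotient)
qed

lemma prod_block_factors_star:
  defines "d1 \<equiv> real (l + (k - 1) * m) - 1" and "d2 \<equiv> real l + real m - 1"
  shows "(\<Prod>c<k. [:sqrt 2 * real (star.block_deg c), 1:] ^ ((l # replicate (k - 1) m) ! c - 1)) =
    [:d1 * sqrt 2, 1:] ^ (l - 1) * [:d2 * sqrt 2, 1:] ^ ((m - 1) * (k - 1))"
proof -
  have "(\<Prod>c<k. [:sqrt 2 * real (star.block_deg c), 1:] ^ ((l # replicate (k - 1) m) ! c - 1)) =
      [:sqrt 2 * real (star.block_deg 0), 1:] ^ (l - 1) *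
      (\<Prod>c<k - 1. [:sqrt 2 * real (star.block_deg (Suc c)), 1:] ^ (m - 1))"
    using prod.lessThan_Suc_shift[of "\<lambda>c. [:sqrt 2 * real (star.block_deg c), 1:] ^
      ((l # replicate (k - 1) m) ! c - 1)" "k - 1"] k2
    by simp
  also have "\<dots> = [:d1 * sqrt 2, 1:] ^ (l - 1) * [:d2 * sqrt 2, 1:] ^ ((m - 1) * (k - 1))"
    using block_deg_star[of 0] block_deg_star[of "Suc _"] k2
    by (simp add: d1_def d2_def mult.commute[of "sqrt 2"] power_mult)
  finally show ?thesis .
qed

lemma char_poly_sombor_star_join:
  defines "d1 \<equiv> real (l + (k - 1) * m) - 1" and "d2 \<equiv> real l + real m - 1"
  defines "a \<equiv> (real l - 1) * d1 * sqrt 2" and "b \<equiv> (real m - 1) * d2 * sqrt 2"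
  defines "D \<equiv> sqrt ((a - b)\<^sup>2 + 4 * real l * real m * (real k - 1) * (d1\<^sup>2 + d2\<^sup>2))"
  shows "char_poly (sombor_matrix (gen_join (star_graph k)
      (complete_graph l # replicate (k - 1) (complete_graph m)))) =
    [:- ((a + b + D) / 2), 1:] * [:- ((a + b - D) / 2), 1:] * [:- b, 1:] ^ (k - 2) *
    ([:d1 * sqrt 2, 1:] ^ (l - 1) * [:d2 * sqrt 2, 1:] ^ ((m - 1) * (k - 1)))"
proof -
  have blocks: "complete_graph l # replicate (k - 1) (complete_graph m) =
      map complete_graph (l # replicate (k - 1) m)" by simp
  have len: "length (l # replicate (k - 1) m) = k" using k2 by simp
  have deg: "real (star.block_deg 0) = d1" "real (star.block_deg 1) = d2"
    using block_deg_star[of 0] block_deg_star[of 1] k2 by (simp_all add: d1_def d2_def)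
  have "0 \<le> (a - b)\<^sup>2 + 4 * (real l * real m * (real k - 1) * (d1\<^sup>2 + d2\<^sup>2))"
    using k2 by simp
  from monic_quadratic_roots[OF this]
  have roots: "[:- a, 1:] * [:- b, 1:] - [:real l * real m * (real k - 1) * (d1\<^sup>2 + d2\<^sup>2):] =
      [:- ((a + b + D) / 2), 1:] * [:- ((a + b - D) / 2), 1:]"
    by (simp only: D_def mult.assoc)
  show ?thesis
    unfolding blocks star.char_poly_sombor_complete_join[unfolded len] prod_block_factors_star
      char_poly_sombor_quotient_star deg d1_def[symmetric] d2_def[symmetric]
      a_def[symmetric] b_def[symmetric] roots ..
qed

end

theorem corollary3p6:
  fixes k l m :: nat
  assumes "k \<ge> 2" "l \<ge> 1" "m \<ge> 1"
  shows
    "let \<Gamma> = gen_join (star_graph k) (complete_graph l # replicate (k - 1) (complete_graph m));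
         n = l + (k - 1) * m;
         d1 = real n - 1;
         d2 = real l + real m - 1;
         a = (real l - 1) * d1 * sqrt 2;
         b = (real m - 1) * d2 * sqrt 2;
         D = sqrt ((a - b)^2 + 4 * real l * real m * (real k - 1) * (d1^2 + d2^2));
         y1 = (a + b + D) / 2;
         y2 = (a + b - D) / 2
     in sombor_spectrum_is \<Gamma>
          (replicate_mset (l - 1) (- (real n - 1) * sqrt 2)
         + replicate_mset ((m - 1) * (k - 1)) (- (real l + real m - 1) * sqrt 2)
         + replicate_mset (k - 2) ((real m - 1) * (real l + real m - 1) * sqrt 2)
         + {# y1, y2 #})"
  unfolding Let_def sombor_spectrum_is_def char_poly_sombor_star_join[OF assms]
  by (simp only: image_mset_union image_replicate_mset image_mset_add_mset image_mset_empty
      prod_mset_Un prod_mset_replicate_mset prod_mset.add_mset prod_mset_empty mult_1_left mult_1_right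
      mult_minus_left mult_minus_right minus_minus mult_ac)

end
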